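(* Let $\mathcal{D}=(\mathcal{P},\mathcal{B},\mathcal{I})$ be a $(v,b,r,k,\lambda_1,0)$ SPBIBD of type $(k-1,t)$ with $0<t<k$, and let $\Gamma$ be its incidence graph. Then every vertex $p\in\mathcal{P}$ has eccentricity $4$ in $\Gamma$.
   Context: A design $\mathcal{D}=(\mathcal{P},\mathcal{B},\mathcal{I})$ is an incidence structure with $|\mathcal{P}|=v$, $|\mathcal{B}|=b$, every block incident with exactly $k$ points and every point with exactly $r$ blocks; standing assumptions: $v>k$ and $r<b$. $(p,B)$ is a flag if $p\in B$, a non-flag otherwise. $\mathcal{D}$ is a $(v,b,r,k,\lambda_1,\lambda_2)$ SPBIBD of type $(s,t)$ if (i) any two distinct points are together in exactly $\lambda_1$ or exactly $\lambda_2$ blocks; (ii) for every flag $(p,B)$, the number of points of $B$ other than $p$ lying with $p$ in exactly $\lambda_1$ blocks is $s$; (iii) for every non-flag $(p,B)$, the number of points of $B$ lying with $p$ in exactly $\lambda_1$ blocks is $t$. The incidence graph is the bipartite graph on $\mathcal{P}\cup\mathcal{B}$ with $p\sim B$ iff $p\in B$. The eccentricity of a vertex $u$ is $\max_w\partial(u,w)$, where $\partial$ is graph distance. *)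

theory Defs
  imports Main "HOL-Library.Extended_Nat"
begin

text \<open>A design: point set P, block set Bl (blocks are abstract objects, so repeated
blocks are allowed), incidence relation I.\<close>

definition design :: "'a set \<Rightarrow> 'b set \<Rightarrow> ('a \<Rightarrow> 'b \<Rightarrow> bool)
    \<Rightarrow> nat \<Rightarrow> nat \<Rightarrow> nat \<Rightarrow> nat \<Rightarrow> bool" where
  "design P Bl I v b r k \<longleftrightarrow>
     finite P \<and> finite Bl \<and> card P = v \<and> card Bl = b \<and>
     (\<forall>B\<in>Bl. card {p\<in>P. I p B} = k) \<and>
     (\<forall>p\<in>P. card {B\<in>Bl. I p B} = r) \<and>
     v > k \<and> r < b"

definition pair_count :: "'a set \<Rightarrow> 'b set \<Rightarrow> ('a \<Rightarrow> 'b \<Rightarrow> bool) \<Rightarrow> 'a \<Rightarrow> 'a \<Rightarrow> nat" where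
  "pair_count P Bl I p q = card {B\<in>Bl. I p B \<and> I q B}"

definition spbibd :: "'a set \<Rightarrow> 'b set \<Rightarrow> ('a \<Rightarrow> 'b \<Rightarrow> bool)
    \<Rightarrow> nat \<Rightarrow> nat \<Rightarrow> nat \<Rightarrow> nat \<Rightarrow> nat \<Rightarrow> nat \<Rightarrow> nat \<Rightarrow> nat \<Rightarrow> bool" where
  "spbibd P Bl I v b r k lam1 lam2 s t \<longleftrightarrow>
     design P Bl I v b r k \<and>
     (\<forall>p\<in>P. \<forall>q\<in>P. p \<noteq> q \<longrightarrow>
        pair_count P Bl I p q = lam1 \<or> pair_count P Bl I p q = lam2) \<and>
     (\<forall>p\<in>P. \<forall>B\<in>Bl. I p B \<longrightarrow>
        card {q\<in>P. q \<noteq> p \<and> I q B \<and> pair_count P Bl I p q = lam1} = s) \<and>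
     (\<forall>p\<in>P. \<forall>B\<in>Bl. \<not> I p B \<longrightarrow>
        card {q\<in>P. I q B \<and> pair_count P Bl I p q = lam1} = t)"

fun inc_adj :: "'a set \<Rightarrow> 'b set \<Rightarrow> ('a \<Rightarrow> 'b \<Rightarrow> bool) \<Rightarrow> 'a + 'b \<Rightarrow> 'a + 'b \<Rightarrow> bool" where
  "inc_adj P Bl I (Inl p) (Inr B) = (p \<in> P \<and> B \<in> Bl \<and> I p B)"
| "inc_adj P Bl I (Inr B) (Inl p) = (p \<in> P \<and> B \<in> Bl \<and> I p B)"
| "inc_adj P Bl I _ _ = False"

definition inc_vertices :: "'a set \<Rightarrow> 'b set \<Rightarrow> ('a + 'b) set" where
  "inc_vertices P Bl = Inl ` P \<union> Inr ` Bl"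

text \<open>Graph distance: length of a shortest walk (\<infinity> if none).\<close>
definition inc_dist :: "'a set \<Rightarrow> 'b set \<Rightarrow> ('a \<Rightarrow> 'b \<Rightarrow> bool) \<Rightarrow> 'a + 'b \<Rightarrow> 'a + 'b \<Rightarrow> enat" where
  "inc_dist P Bl I u w = (INF n \<in> {n. (inc_adj P Bl I ^^ n) u w}. enat n)"

definition inc_ecc :: "'a set \<Rightarrow> 'b set \<Rightarrow> ('a \<Rightarrow> 'b \<Rightarrow> bool) \<Rightarrow> 'a + 'b \<Rightarrow> enat" where
  "inc_ecc P Bl I u = (SUP w \<in> inc_vertices P Bl. inc_dist P Bl I u w)"

end

theory Submission
  imports Defs
begin

text \<open>Since \<open>s = k - 1 > 0\<close>, some point of a block has pair count \<open>\<lambda>\<^sub>1\<close> with another point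
of that block, so \<open>\<lambda>\<^sub>1 > 0\<close>; as \<open>\<lambda>\<^sub>2 = 0\<close>, two distinct points then share a block exactly
when their pair count is \<open>\<lambda>\<^sub>1\<close>. A block \<open>B\<close> missing \<open>p\<close> contains \<open>t > 0\<close> points
sharing a block \<open>B'\<close> with \<open>p\<close>, giving a walk \<open>p, B', q, B\<close>; so every block is within
distance 3 of \<open>p\<close> and every point within distance 4. Such a block also contains \<open>k - t > 0\<close>
points sharing no block with \<open>p\<close>; as the incidence graph is bipartite, they are at even
distance greater than 2, i.e. at distance 4.\<close>

lemma inc_dist_le_walk:
  assumes "(inc_adj P Bl I ^^ n) u w"
  shows "inc_dist P Bl I u w \<le> enat n"
  unfolding inc_dist_def by (rule INF_lower) (use assms in simp)

lemma inc_ecc_le_walks: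
  assumes "\<And>w. w \<in> inc_vertices P Bl \<Longrightarrow> \<exists>m\<le>n. (inc_adj P Bl I ^^ m) u w"
  shows "inc_ecc P Bl I u \<le> enat n"
  unfolding inc_ecc_def
proof (rule SUP_least)
  fix w assume "w \<in> inc_vertices P Bl"
  then obtain m where "m \<le> n" "(inc_adj P Bl I ^^ m) u w" using assms by blast
  then have "inc_dist P Bl I u w \<le> enat m" by (intro inc_dist_le_walk)
  also have "\<dots> \<le> enat n" using \<open>m \<le> n\<close> by simp
  finally show "inc_dist P Bl I u w \<le> enat n" .
qed

lemma inc_walk_from_point_even_iff:
  assumes "(inc_adj P Bl I ^^ n) (Inl p) w"
  shows "even n \<longleftrightarrow> (\<exists>q. w = Inl q)"
  using assms
proof (induction n arbitrary: w)
  case 0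
  then show ?case by auto
next
  case (Suc n)
  then obtain y where "(inc_adj P Bl I ^^ n) (Inl p) y" "inc_adj P Bl I y w"
    by auto
  with Suc.IH show ?case by (cases y; cases w) auto
qed

lemma inc_walk_2_common_block:
  assumes "(inc_adj P Bl I ^^ 2) (Inl p) (Inl q)"
  shows "\<exists>B\<in>Bl. I p B \<and> I q B"
proof -
  from assms obtain y where "inc_adj P Bl I (Inl p) y" "inc_adj P Bl I y (Inl q)"
    by (auto simp: numeral_2_eq_2 relpowp_Suc_left)
  then show ?thesis by (cases y) auto
qed

lemma inc_dist_ge_4_if_no_common_block:
  assumes "p \<noteq> q" and "\<not> (\<exists>B\<in>Bl. I p B \<and> I q B)"
  shows "4 \<le> inc_dist P Bl I (Inl p) (Inl q)"
  unfolding inc_dist_def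
proof (rule INF_greatest)
  fix n assume "n \<in> {n. (inc_adj P Bl I ^^ n) (Inl p) (Inl q)}"
  then have walk: "(inc_adj P Bl I ^^ n) (Inl p) (Inl q)" by simp
  have "even n" using inc_walk_from_point_even_iff[OF walk] by simp
  moreover have "n \<noteq> 0"
  proof
    assume "n = 0"
    with walk \<open>p \<noteq> q\<close> show False by simp
  qed
  moreover have "n \<noteq> 2"
  proof
    assume "n = 2"
    with walk have "\<exists>B\<in>Bl. I p B \<and> I q B" using inc_walk_2_common_block by metis
    with assms(2) show False ..
  qed
  ultimately have "4 \<le> n" by presburger
  then show "4 \<le> enat n" by (simp add: numeral_eq_enat)
qed

lemma designD:
  assumes "design P Bl I v b r k"
  shows "finite P" "finite Bl" "card Bl = b" "r < b"
    and "B \<in> Bl \<Longrightarrow> card {p\<in>P. I p B} = k"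
    and "p \<in> P \<Longrightarrow> card {B\<in>Bl. I p B} = r"
  using assms unfolding design_def by auto

lemma spbibdD:
  assumes "spbibd P Bl I v b r k lam1 lam2 s t"
  shows "design P Bl I v b r k"
    and "\<lbrakk>p \<in> P; q \<in> P; p \<noteq> q\<rbrakk> \<Longrightarrow>
      pair_count P Bl I p q = lam1 \<or> pair_count P Bl I p q = lam2"
    and "\<lbrakk>p \<in> P; B \<in> Bl; I p B\<rbrakk> \<Longrightarrow>
      card {q\<in>P. q \<noteq> p \<and> I q B \<and> pair_count P Bl I p q = lam1} = s"
    and "\<lbrakk>p \<in> P; B \<in> Bl; \<not> I p B\<rbrakk> \<Longrightarrow>
      card {q\<in>P. I q B \<and> pair_count P Bl I p q = lam1} = t"
  using assms unfolding spbibd_def by auto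

lemma pair_count_pos_iff:
  assumes "finite Bl"
  shows "0 < pair_count P Bl I p q \<longleftrightarrow> (\<exists>B\<in>Bl. I p B \<and> I q B)"
  unfolding pair_count_def using assms by (auto simp: card_gt_0_iff)

lemma design_ex_flag:
  assumes "design P Bl I v b r k" and "0 < k"
  obtains p B where "p \<in> P" "B \<in> Bl" "I p B"
proof -
  have "Bl \<noteq> {}" using designD(3,4)[OF assms(1)] by auto
  then obtain B where B: "B \<in> Bl" by blast
  then have "{p\<in>P. I p B} \<noteq> {}" using designD(5)[OF assms(1) B] \<open>0 < k\<close> by force
  with B show thesis using that by blast
qed

lemma design_point_in_block:
  assumes "design P Bl I v b r k" and "0 < k" and "p \<in> P"
  shows "\<exists>B\<in>Bl. I p B"
proof -
  obtain p0 B0 where "p0 \<in> P" "B0 \<in> Bl" "I p0 B0" using design_ex_flag assms(1,2) .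
  then have "{B\<in>Bl. I p0 B} \<noteq> {}" by blast
  then have "0 < card {B\<in>Bl. I p0 B}"
    using designD(2)[OF assms(1)] by (simp add: card_gt_0_iff)
  then have "0 < r" using designD(6)[OF assms(1) \<open>p0 \<in> P\<close>] by simp
  then have "{B\<in>Bl. I p B} \<noteq> {}" using designD(6)[OF assms(1,3)] by force
  then show ?thesis by blast
qed

lemma design_ex_nonflag:
  assumes "design P Bl I v b r k" and "p \<in> P"
  shows "\<exists>B\<in>Bl. \<not> I p B"
proof (rule ccontr)
  assume "\<not> ?thesis"
  then have "{B\<in>Bl. I p B} = Bl" by auto
  then show False using designD(3,4)[OF assms(1)] designD(6)[OF assms] by simp
qed

lemma spbibd_lam1_pos:
  assumes "spbibd P Bl I v b r k lam1 lam2 s t" and "0 < s" and "0 < k"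
  shows "0 < lam1"
proof -
  note D = spbibdD[OF assms(1)]
  obtain p B where flag: "p \<in> P" "B \<in> Bl" "I p B" using design_ex_flag D(1) \<open>0 < k\<close> .
  then have "{q\<in>P. q \<noteq> p \<and> I q B \<and> pair_count P Bl I p q = lam1} \<noteq> {}"
    using D(3) \<open>0 < s\<close> by fastforce
  then obtain q where "I q B" "pair_count P Bl I p q = lam1" by blast
  then show ?thesis
    using flag pair_count_pos_iff[OF designD(2)[OF D(1)]] by metis
qed

lemma spbibd_walk_to_block:
  assumes "spbibd P Bl I v b r k lam1 lam2 s t" and "0 < t" and "0 < lam1"
    and "p \<in> P" and "B \<in> Bl"
  shows "\<exists>m\<le>3. (inc_adj P Bl I ^^ m) (Inl p) (Inr B)"
proof (cases "I p B")
  case True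
  then have "(inc_adj P Bl I ^^ 1) (Inl p) (Inr B)" using assms(4,5) by (simp add: eq_OO)
  then show ?thesis by (intro exI[of _ 1]) simp
next
  case False
  note D = spbibdD[OF assms(1)]
  have "{q\<in>P. I q B \<and> pair_count P Bl I p q = lam1} \<noteq> {}"
    using D(4)[OF assms(4,5) False] \<open>0 < t\<close> by fastforce
  then obtain q where q: "q \<in> P" "I q B" "pair_count P Bl I p q = lam1" by blast
  then obtain B' where B': "B' \<in> Bl" "I p B'" "I q B'"
    using pair_count_pos_iff[OF designD(2)[OF D(1)]] \<open>0 < lam1\<close> by metis
  have "(inc_adj P Bl I ^^ 0) (Inl p) (Inl p)" by simp
  then have "(inc_adj P Bl I ^^ Suc 0) (Inl p) (Inr B')"
    by (rule relpowp_Suc_I) (use B' assms(4) in simp)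
  then have "(inc_adj P Bl I ^^ Suc (Suc 0)) (Inl p) (Inl q)"
    by (rule relpowp_Suc_I) (use B' q in simp)
  then have "(inc_adj P Bl I ^^ Suc (Suc (Suc 0))) (Inl p) (Inr B)"
    by (rule relpowp_Suc_I) (use assms(5) q in simp)
  then show ?thesis by (intro exI[of _ 3]) (simp add: numeral_3_eq_3)
qed

lemma spbibd_ecc_le_4:
  assumes "spbibd P Bl I v b r k lam1 lam2 s t" and "0 < t" and "0 < lam1" and "0 < k"
    and "p \<in> P"
  shows "inc_ecc P Bl I (Inl p) \<le> 4"
proof -
  have "\<exists>m\<le>4. (inc_adj P Bl I ^^ m) (Inl p) w" if "w \<in> inc_vertices P Bl" for w
  proof -
    from that consider (point) q where "w = Inl q" "q \<in> P"
      | (block) B where "w = Inr B" "B \<in> Bl"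
      unfolding inc_vertices_def by auto
    then show ?thesis
    proof cases
      case point
      then obtain B where B: "B \<in> Bl" "I q B"
        using design_point_in_block[OF spbibdD(1)[OF assms(1)] \<open>0 < k\<close>] by blast
      then obtain m where "m \<le> 3" "(inc_adj P Bl I ^^ m) (Inl p) (Inr B)"
        using spbibd_walk_to_block[OF assms(1,2,3,5) B(1)] by blast
      then have "(inc_adj P Bl I ^^ Suc m) (Inl p) w"
        using B point by (auto intro: relpowp_Suc_I)
      with \<open>m \<le> 3\<close> show ?thesis by (intro exI[of _ "Suc m"]) simp
    next
      case block
      then obtain m where "m \<le> 3" "(inc_adj P Bl I ^^ m) (Inl p) w"
        using spbibd_walk_to_block[OF assms(1,2,3,5)] by blast
      then show ?thesis by (intro exI[of _ m]) simp
    qed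
  qed
  then have "inc_ecc P Bl I (Inl p) \<le> enat 4" by (rule inc_ecc_le_walks)
  then show ?thesis by (simp add: numeral_eq_enat)
qed

lemma spbibd_lam2_0_ecc_ge_4:
  assumes "spbibd P Bl I v b r k lam1 0 s t" and "t < k" and "p \<in> P"
  shows "4 \<le> inc_ecc P Bl I (Inl p)"
proof -
  note D = spbibdD[OF assms(1)]
  obtain B where B: "B \<in> Bl" "\<not> I p B" using design_ex_nonflag[OF D(1) assms(3)] by blast
  have "{q\<in>P. I q B \<and> pair_count P Bl I p q = lam1} \<noteq> {q\<in>P. I q B}"
    using D(4)[OF assms(3) B] designD(5)[OF D(1) B(1)] \<open>t < k\<close> by auto
  then obtain q where q: "q \<in> P" "I q B" "pair_count P Bl I p q \<noteq> lam1" by blast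
  have "q \<noteq> p" using q B by auto
  then have "pair_count P Bl I p q = 0" using D(2)[OF assms(3) q(1)] q(3) by auto
  then have "\<not> (\<exists>B\<in>Bl. I p B \<and> I q B)"
    using pair_count_pos_iff[OF designD(2)[OF D(1)], of P I p q] by simp
  then have "4 \<le> inc_dist P Bl I (Inl p) (Inl q)"
    using \<open>q \<noteq> p\<close> by (intro inc_dist_ge_4_if_no_common_block) auto
  moreover have "Inl q \<in> inc_vertices P Bl" using q unfolding inc_vertices_def by auto
  ultimately show ?thesis unfolding inc_ecc_def by (meson SUP_upper2)
qed

theorem lemma4p1:
  fixes P :: "'a set" and Bl :: "'b set" and I :: "'a \<Rightarrow> 'b \<Rightarrow> bool"
    and v b r k lam1 t :: nat
  assumes "spbibd P Bl I v b r k lam1 0 (k - 1) t"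
    and "0 < t" and "t < k"
    and "p \<in> P"
  shows "inc_ecc P Bl I (Inl p) = 4"
proof -
  have "0 < k - 1" and "0 < k" using assms(2,3) by simp_all
  then have "0 < lam1" by (rule spbibd_lam1_pos[OF assms(1)])
  show ?thesis
  proof (rule antisym)
    show "inc_ecc P Bl I (Inl p) \<le> 4"
      by (rule spbibd_ecc_le_4[OF assms(1,2) \<open>0 < lam1\<close> \<open>0 < k\<close> assms(4)])
    show "4 \<le> inc_ecc P Bl I (Inl p)"
      by (rule spbibd_lam2_0_ecc_ge_4[OF assms(1,3,4)])
  qed
qed

end
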